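(* Let $d$ be an odd prime and $n\ge1$. Let $P=Z_1^{a_1}X_1^{b_1}\cdots Z_n^{a_n}X_n^{b_n}$ and $Q=Z_1^{c_1}X_1^{e_1}\cdots Z_n^{c_n}X_n^{e_n}$ be elements of $\mathcal{P}_d^n$ with $(P,Q)=\sum_{i=1}^n(a_ie_i-b_ic_i)=1$ in $\mathbb{Z}_d$. Then there exists a circuit $M$ built from the gates $C_X$, $F$, $S$ such that, for some exponents $a'_i,b'_i,c'_i,e'_i\in\mathbb{Z}_d$ and complex scalars $\lambda,\mu$, $$MPM^{-1}=\lambda Z_1^{a'_1}X_1^{b'_1}\cdots Z_n^{a'_n}X_n^{b'_n},\qquad MQM^{-1}=\mu Z_1^{c'_1}X_1^{e'_1}\cdots Z_n^{c'_n}X_n^{e'_n},$$ and there exists $j\in\{1,\dots,n\}$ with $a'_je'_j-b'_jc'_j=1$ in $\mathbb{Z}_d$.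
   Context: $\omega=e^{2\pi i/d}$; $X|j\rangle=|j+1\bmod d\rangle$, $Z|j\rangle=\omega^j|j\rangle$, $F|j\rangle=\frac1{\sqrt d}\sum_m\omega^{jm}|m\rangle$, $S|j\rangle=\omega^{j(j+1)/2}|j\rangle$, $C_X|j\rangle|k\rangle=|j\rangle|j+k\bmod d\rangle$. Subscript $i$ on $X_i,Z_i$ means the operator acts on qudit $i$. $\mathcal{P}_d^n$ is the group of operators $\omega^kZ_1^{a_1}X_1^{b_1}\cdots Z_n^{a_n}X_n^{b_n}$. A circuit built from a gate set is a finite product of gates from the set, one-qudit gates on any qudit, two-qudit gates on any ordered pair of distinct qudits. *)

theory Defs
  imports Complex_Main "HOL-Computational_Algebra.Primes"
begin

text \<open>n qudits of dimension d, indexed 0..n-1. A computational basis state is a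
configuration j : nat => nat with j i < d for i < n and j i = 0 for i >= n.
An operator on the Hilbert space (C^d)^{\<otimes> n} is represented by its matrix
kernel A x y = <x|A|y>, only values on configurations matter.\<close>

type_synonym qop = "(nat \<Rightarrow> nat) \<Rightarrow> (nat \<Rightarrow> nat) \<Rightarrow> complex"

definition Conf :: "nat \<Rightarrow> nat \<Rightarrow> (nat \<Rightarrow> nat) set" where
  "Conf n d = {j. (\<forall>i<n. j i < d) \<and> (\<forall>i\<ge>n. j i = 0)}"

definition op_mult :: "nat \<Rightarrow> nat \<Rightarrow> qop \<Rightarrow> qop \<Rightarrow> qop" where
  "op_mult n d A B = (\<lambda>x y. \<Sum>z\<in>Conf n d. A x z * B z y)"

definition op_id :: qop where
  "op_id = (\<lambda>x y. if x = y then 1 else 0)"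

definition op_scale :: "complex \<Rightarrow> qop \<Rightarrow> qop" where
  "op_scale c A = (\<lambda>x y. c * A x y)"

definition op_eq :: "nat \<Rightarrow> nat \<Rightarrow> qop \<Rightarrow> qop \<Rightarrow> bool" where
  "op_eq n d A B \<longleftrightarrow> (\<forall>x\<in>Conf n d. \<forall>y\<in>Conf n d. A x y = B x y)"

fun op_pow :: "nat \<Rightarrow> nat \<Rightarrow> qop \<Rightarrow> nat \<Rightarrow> qop" where
  "op_pow n d A 0 = op_id"
| "op_pow n d A (Suc k) = op_mult n d A (op_pow n d A k)"

definition omega :: "nat \<Rightarrow> complex" where
  "omega d = cis (2 * pi / real d)"

text \<open>Single-qudit gates as d x d kernels g m j = <m|g|j>.\<close>
definition gX :: "nat \<Rightarrow> nat \<Rightarrow> nat \<Rightarrow> complex" where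
  "gX d m j = (if m = (j + 1) mod d then 1 else 0)"

definition gZ :: "nat \<Rightarrow> nat \<Rightarrow> nat \<Rightarrow> complex" where
  "gZ d m j = (if m = j then omega d ^ j else 0)"

definition gF :: "nat \<Rightarrow> nat \<Rightarrow> nat \<Rightarrow> complex" where
  "gF d m j = omega d ^ (j * m) / complex_of_real (sqrt (real d))"

definition gS :: "nat \<Rightarrow> nat \<Rightarrow> nat \<Rightarrow> complex" where
  "gS d m j = (if m = j then omega d ^ (j * (j + 1) div 2) else 0)"

definition lift1 :: "nat \<Rightarrow> (nat \<Rightarrow> nat \<Rightarrow> complex) \<Rightarrow> qop" where
  "lift1 i g = (\<lambda>x y. if (\<forall>k. k \<noteq> i \<longrightarrow> x k = y k) then g (x i) (y i) else 0)"

definition CX :: "nat \<Rightarrow> nat \<Rightarrow> nat \<Rightarrow> qop" where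
  "CX d i k = (\<lambda>x y. if x i = y i \<and> x k = (y i + y k) mod d
                        \<and> (\<forall>m. m \<noteq> i \<and> m \<noteq> k \<longrightarrow> x m = y m) then 1 else 0)"

inductive circuit :: "nat \<Rightarrow> nat \<Rightarrow> qop \<Rightarrow> bool" for n d where
  circ_id: "circuit n d op_id"
| circ_F: "circuit n d M \<Longrightarrow> i < n \<Longrightarrow> circuit n d (op_mult n d (lift1 i (gF d)) M)"
| circ_S: "circuit n d M \<Longrightarrow> i < n \<Longrightarrow> circuit n d (op_mult n d (lift1 i (gS d)) M)"
| circ_CX: "circuit n d M \<Longrightarrow> i < n \<Longrightarrow> k < n \<Longrightarrow> i \<noteq> k \<Longrightarrow>
            circuit n d (op_mult n d (CX d i k) M)"

definition pauli :: "nat \<Rightarrow> nat \<Rightarrow> (nat \<Rightarrow> nat) \<Rightarrow> (nat \<Rightarrow> nat) \<Rightarrow> qop" where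
  "pauli n d a b = foldr (\<lambda>i A. op_mult n d (op_mult n d (op_pow n d (lift1 i (gZ d)) (a i))
                                             (op_pow n d (lift1 i (gX d)) (b i))) A)
                         [0..<n] op_id"

end

theory Submission
  imports Defs "HOL-Number_Theory.Number_Theory"
begin

(* Conjugation by S_j or by CX_{i,k} maps a Pauli operator Z^a X^b to a multiple of another one, whose
   exponents are (a_j + b_j, b) resp. (a_i - a_k, b_k + b_i), and both moves preserve the symplectic
   form modulo d. Since (P, Q) = 1, P is nontrivial on some qudit j. If its X-exponent at j is nonzero,
   CX gates with control j clear the X-part of P outside j, and one S_j makes the Z-exponent at j
   nonzero. CX gates with target j then clear the Z-part outside j (this needs d prime). Now P lives on
   qudit j alone, so (P, Q) reduces to its j-th term, which is therefore 1. *)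

lemma finite_Conf: "finite (Conf n d)"
proof -
  have "Conf n d = {j. \<forall>i. (i \<in> {..<n} \<longrightarrow> j i \<in> {..<d}) \<and> (i \<notin> {..<n} \<longrightarrow> j i = 0)}"
    by (auto simp: Conf_def not_less)
  then show ?thesis
    by (simp only: finite_set_of_finite_funs finite_lessThan)
qed

lemma op_mult_assoc: "op_mult n d (op_mult n d A B) C = op_mult n d A (op_mult n d B C)"
  unfolding op_mult_def
  by (auto simp: fun_eq_iff sum_distrib_left sum_distrib_right mult.assoc intro: sum.swap)

lemma op_eq_refl [simp]: "op_eq n d A A"
  by (simp add: op_eq_def)

lemma op_eq_trans [trans]: "op_eq n d A B \<Longrightarrow> op_eq n d B C \<Longrightarrow> op_eq n d A C"
  by (simp add: op_eq_def)

lemma op_eq_mult: "op_eq n d A A' \<Longrightarrow> op_eq n d B B' \<Longrightarrow> op_eq n d (op_mult n d A B) (op_mult n d A' B')"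
  by (simp add: op_eq_def op_mult_def)

lemma op_eq_scale: "op_eq n d A B \<Longrightarrow> op_eq n d (op_scale c A) (op_scale c B)"
  by (simp add: op_eq_def op_scale_def)

lemma op_mult_scale_left: "op_mult n d (op_scale c A) B = op_scale c (op_mult n d A B)"
  by (simp add: op_mult_def op_scale_def fun_eq_iff sum_distrib_left mult.assoc)

lemma op_mult_scale_right: "op_mult n d A (op_scale c B) = op_scale c (op_mult n d A B)"
  by (simp add: op_mult_def op_scale_def fun_eq_iff sum_distrib_left mult.left_commute)

lemma op_scale_scale: "op_scale c (op_scale c' A) = op_scale (c * c') A"
  by (simp add: op_scale_def fun_eq_iff)

lemma op_scale_one: "op_scale 1 A = A"
  by (simp add: op_scale_def)

lemma op_mult_id_right: "op_eq n d (op_mult n d A op_id) A"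
  unfolding op_eq_def op_mult_def op_id_def
  by (simp add: finite_Conf if_distrib cong: if_cong)

lemma op_mult_id_left: "op_eq n d (op_mult n d op_id A) A"
  unfolding op_eq_def op_mult_def op_id_def
proof (intro ballI)
  fix x y assume "x \<in> Conf n d"
  have "(\<Sum>z\<in>Conf n d. (if x = z then 1 else 0) * A z y) = (\<Sum>z\<in>Conf n d. if x = z then A x y else 0)"
    by (rule sum.cong) auto
  then show "(\<Sum>z\<in>Conf n d. (if x = z then 1 else 0) * A z y) = A x y"
    using \<open>x \<in> Conf n d\<close> by (simp add: finite_Conf)
qed

section \<open>Monomial operators\<close>

(* Generalized permutation matrices, A |y> = c y |p y>: the Pauli operators and all gates except F
   are of this form. *)
definition monomial_op ::
    "nat \<Rightarrow> nat \<Rightarrow> qop \<Rightarrow> ((nat \<Rightarrow> nat) \<Rightarrow> nat \<Rightarrow> nat) \<Rightarrow> ((nat \<Rightarrow> nat) \<Rightarrow> complex) \<Rightarrow> bool" where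
  "monomial_op n d A p c \<longleftrightarrow> (\<forall>y\<in>Conf n d. p y \<in> Conf n d) \<and>
     (\<forall>x\<in>Conf n d. \<forall>y\<in>Conf n d. A x y = (if x = p y then c y else 0))"

definition monomial_kernel :: "((nat \<Rightarrow> nat) \<Rightarrow> nat \<Rightarrow> nat) \<Rightarrow> ((nat \<Rightarrow> nat) \<Rightarrow> complex) \<Rightarrow> qop" where
  "monomial_kernel p c = (\<lambda>x y. if x = p y then c y else 0)"

lemma monomial_op_kernel:
  "(\<And>y. y \<in> Conf n d \<Longrightarrow> p y \<in> Conf n d) \<Longrightarrow> monomial_op n d (monomial_kernel p c) p c"
  by (simp add: monomial_op_def monomial_kernel_def)

lemma monomial_op_id: "monomial_op n d op_id id (\<lambda>_. 1)"
  by (simp add: monomial_op_def op_id_def)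

lemma monomial_op_scale: "monomial_op n d A p c \<Longrightarrow> monomial_op n d (op_scale s A) p (\<lambda>y. s * c y)"
  by (simp add: monomial_op_def op_scale_def)

lemma monomial_op_cong:
  "monomial_op n d A p c \<Longrightarrow> (\<And>y. y \<in> Conf n d \<Longrightarrow> p y = p' y \<and> c y = c' y) \<Longrightarrow> monomial_op n d A p' c'"
  by (simp add: monomial_op_def)

lemma monomial_op_mult:
  assumes A: "monomial_op n d A p c" and B: "monomial_op n d B q c'"
  shows "monomial_op n d (op_mult n d A B) (p \<circ> q) (\<lambda>y. c (q y) * c' y)"
  unfolding monomial_op_def
proof (intro conjI ballI)
  fix y assume y: "y \<in> Conf n d"
  then have qy: "q y \<in> Conf n d" using B by (simp add: monomial_op_def)
  then show "(p \<circ> q) y \<in> Conf n d" using A by (simp add: monomial_op_def)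
  fix x assume x: "x \<in> Conf n d"
  have "op_mult n d A B x y = (\<Sum>z\<in>Conf n d. if z = q y then A x (q y) * c' y else 0)"
    unfolding op_mult_def using B y by (intro sum.cong) (auto simp: monomial_op_def)
  also have "\<dots> = A x (q y) * c' y"
    using qy by (simp add: finite_Conf)
  also have "\<dots> = (if x = (p \<circ> q) y then c (q y) * c' y else 0)"
    using A x qy by (simp add: monomial_op_def)
  finally show "op_mult n d A B x y = (if x = (p \<circ> q) y then c (q y) * c' y else 0)" .
qed

lemma op_eq_monomial_op:
  "monomial_op n d A p c \<Longrightarrow> monomial_op n d B p' c' \<Longrightarrow>
   (\<And>y. y \<in> Conf n d \<Longrightarrow> p y = p' y \<and> c y = c' y) \<Longrightarrow> op_eq n d A B"
  by (simp add: monomial_op_def op_eq_def)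

definition op_inverse :: "nat \<Rightarrow> nat \<Rightarrow> qop \<Rightarrow> qop \<Rightarrow> bool" where
  "op_inverse n d A B \<longleftrightarrow> op_eq n d (op_mult n d A B) op_id \<and> op_eq n d (op_mult n d B A) op_id"

lemma monomial_op_invertible:
  assumes A: "monomial_op n d A p c"
    and q: "\<And>y. y \<in> Conf n d \<Longrightarrow> q y \<in> Conf n d \<and> p (q y) = y \<and> q (p y) = y"
    and c: "\<And>y. y \<in> Conf n d \<Longrightarrow> c y \<noteq> 0"
  shows "\<exists>B. op_inverse n d A B"
proof
  have B: "monomial_op n d (monomial_kernel q (\<lambda>y. inverse (c (q y)))) q (\<lambda>y. inverse (c (q y)))"
    using q by (intro monomial_op_kernel) blast
  have p: "p y \<in> Conf n d" if "y \<in> Conf n d" for y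
    using A that by (simp add: monomial_op_def)
  show "op_inverse n d A (monomial_kernel q (\<lambda>y. inverse (c (q y))))"
    unfolding op_inverse_def
  proof
    show "op_eq n d (op_mult n d A (monomial_kernel q (\<lambda>y. inverse (c (q y))))) op_id"
      by (rule op_eq_monomial_op[OF monomial_op_mult[OF A B] monomial_op_id]) (simp add: q c)
    show "op_eq n d (op_mult n d (monomial_kernel q (\<lambda>y. inverse (c (q y)))) A) op_id"
      by (rule op_eq_monomial_op[OF monomial_op_mult[OF B A] monomial_op_id]) (simp add: q p c)
  qed
qed

section \<open>Pauli operators and the gates S and CX\<close>

lemma omega_nonzero: "omega d \<noteq> 0"
  by (simp add: omega_def)

lemma omega_pow_mod: "omega d ^ (N mod d) = omega d ^ N"
proof (cases "d = 0")
  case False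
  have "omega d ^ d = 1"
    using False by (simp add: omega_def DeMoivre)
  have "omega d ^ N = (omega d ^ d) ^ (N div d) * omega d ^ (N mod d)"
    by (metis div_mult_mod_eq mult.commute power_add power_mult)
  then show ?thesis
    using \<open>omega d ^ d = 1\<close> by simp
qed simp

lemma omega_pow_cong: "[N = M] (mod d) \<Longrightarrow> omega d ^ N = omega d ^ M"
  by (metis cong_def omega_pow_mod)

lemma sum_eq_off_subset:
  fixes f g :: "'a \<Rightarrow> 'b::comm_monoid_add"
  assumes "finite A" "B \<subseteq> A" "\<And>x. x \<in> A - B \<Longrightarrow> f x = g x"
  shows "sum f A + sum g B = sum g A + sum f B"
proof -
  have "sum f A = sum f (A - B) + sum f B" "sum g A = sum g (A - B) + sum g B"
    using assms(1,2) by (simp_all add: sum.subset_diff)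
  moreover have "sum f (A - B) = sum g (A - B)"
    using assms(3) by (rule sum.cong[OF refl])
  ultimately show ?thesis
    by (simp add: ac_simps)
qed

lemma triangle_add:
  "(y + b) * (y + b + 1) div 2 + b * (b - 1) div 2 = b * (y + b) + y * (y + 1) div 2" for y b :: nat
proof (induction b)
  case (Suc b)
  have "(m + 2) * (m + 1) div 2 = m * (m + 1) div 2 + (m + 1)" for m :: nat
    using div_mult_self2[of 2 "m * (m + 1)" "m + 1"] by (simp add: algebra_simps)
  from this[of "y + b"] this[of "b - 1"] Suc show ?case
    by (cases b) (simp_all add: algebra_simps)
qed simp

lemma triangle_cong:
  fixes x x' d :: nat
  assumes "odd d" "[x = x'] (mod d)"
  shows "[x * (x + 1) div 2 = x' * (x' + 1) div 2] (mod d)"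
proof -
  have "[2 * (x * (x + 1) div 2) = 2 * (x' * (x' + 1) div 2)] (mod d)"
    using assms(2) by (simp del: One_nat_def add: cong_add cong_mult)
  moreover have "coprime 2 d"
    using assms(1) by simp
  ultimately show ?thesis
    using cong_mult_lcancel_nat by blast
qed

lemma S_phase_cong:
  fixes x y b d :: nat
  assumes "odd d" "x = (y + b) mod d"
  shows "[x * (x + 1) div 2 = b * (b - 1) div 2 * (d - 1) + b * x + y * (y + 1) div 2] (mod d)"
proof -
  let ?B = "b * (b - 1) div 2"
  have x: "[x = y + b] (mod d)"
    using assms(2) by (simp add: cong_def)
  have "d > 0"
    using assms(1) by (rule odd_pos)
  have "[x * (x + 1) div 2 = (y + b) * (y + b + 1) div 2] (mod d)"
    by (rule triangle_cong[OF assms(1) x])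
  also have "[(y + b) * (y + b + 1) div 2 = ?B * d + (y + b) * (y + b + 1) div 2] (mod d)"
    by (simp add: cong_def)
  also have "?B * d + (y + b) * (y + b + 1) div 2 = ?B * (d - 1) + b * (y + b) + y * (y + 1) div 2"
    using triangle_add[of y b] \<open>d > 0\<close> by (cases d) (simp_all add: algebra_simps)
  also have "[\<dots> = ?B * (d - 1) + b * x + y * (y + 1) div 2] (mod d)"
    using x by (intro cong_add cong_mult cong_refl) (rule cong_sym)
  finally show ?thesis .
qed

lemma CX_phase_cong:
  fixes d ai ak xi xk :: nat
  assumes "d > 0"
  shows "[(ai + (d - 1) * ak) * xi + ak * ((xi + xk) mod d) = ai * xi + ak * xk] (mod d)"
proof -
  have "[(ai + (d - 1) * ak) * xi + ak * ((xi + xk) mod d) = (ai + (d - 1) * ak) * xi + ak * (xi + xk)] (mod d)"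
    by (intro cong_add cong_mult cong_refl) (simp add: cong_def)
  also have "(ai + (d - 1) * ak) * xi + ak * (xi + xk) = d * (ak * xi) + (ai * xi + ak * xk)"
    using assms by (cases d) (simp_all add: algebra_simps)
  also have "[\<dots> = ai * xi + ak * xk] (mod d)"
    by (simp add: cong_def)
  finally show ?thesis .
qed

lemma Conf_upd: "y \<in> Conf n d \<Longrightarrow> i < n \<Longrightarrow> v < d \<Longrightarrow> y(i := v) \<in> Conf n d"
  by (auto simp: Conf_def)

lemma monomial_op_Z: "i < n \<Longrightarrow> monomial_op n d (lift1 i (gZ d)) id (\<lambda>y. omega d ^ y i)"
  unfolding monomial_op_def lift1_def gZ_def
  by (auto simp: fun_eq_iff)

lemma monomial_op_X:
  "i < n \<Longrightarrow> d > 0 \<Longrightarrow> monomial_op n d (lift1 i (gX d)) (\<lambda>y. y(i := (y i + 1) mod d)) (\<lambda>_. 1)"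
proof -
  have "(\<forall>k. k \<noteq> i \<longrightarrow> x k = y k) \<and> x i = v \<longleftrightarrow> x = y(i := v)" for x y :: "nat \<Rightarrow> nat" and v
    by (auto simp: fun_eq_iff)
  then show "i < n \<Longrightarrow> d > 0 \<Longrightarrow> ?thesis"
    unfolding monomial_op_def lift1_def gX_def by (auto simp: Conf_upd)
qed

lemma monomial_op_S:
  "i < n \<Longrightarrow> monomial_op n d (lift1 i (gS d)) id (\<lambda>y. omega d ^ (y i * (y i + 1) div 2))"
  unfolding monomial_op_def lift1_def gS_def
  by (auto simp: fun_eq_iff)

lemma monomial_op_CX:
  "i < n \<Longrightarrow> k < n \<Longrightarrow> i \<noteq> k \<Longrightarrow> d > 0 \<Longrightarrow>
   monomial_op n d (CX d i k) (\<lambda>y. y(k := (y i + y k) mod d)) (\<lambda>_. 1)"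
  unfolding monomial_op_def CX_def
  by (auto simp: Conf_upd fun_eq_iff)

lemma monomial_op_Z_pow:
  "i < n \<Longrightarrow> monomial_op n d (op_pow n d (lift1 i (gZ d)) m) id (\<lambda>y. omega d ^ (m * y i))"
proof (induction m)
  case 0
  show ?case
    unfolding op_pow.simps by (rule monomial_op_cong[OF monomial_op_id]) simp
next
  case (Suc m)
  show ?case
    unfolding op_pow.simps
    by (rule monomial_op_cong[OF monomial_op_mult[OF monomial_op_Z Suc.IH]]) (simp_all add: Suc.prems power_add)
qed

lemma monomial_op_X_pow:
  "i < n \<Longrightarrow> d > 0 \<Longrightarrow>
   monomial_op n d (op_pow n d (lift1 i (gX d)) m) (\<lambda>y. y(i := (y i + m) mod d)) (\<lambda>_. 1)"
proof (induction m)
  case 0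
  show ?case
    unfolding op_pow.simps by (rule monomial_op_cong[OF monomial_op_id]) (use 0 in \<open>auto simp: Conf_def fun_eq_iff\<close>)
next
  case (Suc m)
  show ?case
    unfolding op_pow.simps
    by (rule monomial_op_cong[OF monomial_op_mult[OF monomial_op_X Suc.IH]]) (simp_all add: Suc.prems mod_simps fun_eq_iff)
qed

lemma monomial_op_pauli_foldr:
  assumes "distinct xs" "set xs \<subseteq> {..<n}" "d > 0"
  shows "monomial_op n d
     (foldr (\<lambda>i A. op_mult n d (op_mult n d (op_pow n d (lift1 i (gZ d)) (a i))
                                            (op_pow n d (lift1 i (gX d)) (b i))) A) xs op_id)
     (\<lambda>y m. if m \<in> set xs then (y m + b m) mod d else y m)
     (\<lambda>y. omega d ^ (\<Sum>m\<in>set xs. a m * ((y m + b m) mod d)))"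
  using assms
proof (induction xs)
  case Nil
  show ?case
    unfolding foldr.simps id_apply by (rule monomial_op_cong[OF monomial_op_id]) simp
next
  case (Cons i xs)
  then have i: "i < n" "i \<notin> set xs"
    by auto
  have ZX: "monomial_op n d (op_mult n d (op_pow n d (lift1 i (gZ d)) (a i)) (op_pow n d (lift1 i (gX d)) (b i)))
     (\<lambda>y. y(i := (y i + b i) mod d)) (\<lambda>y. omega d ^ (a i * ((y i + b i) mod d)))"
    by (rule monomial_op_cong[OF monomial_op_mult[OF monomial_op_Z_pow monomial_op_X_pow]])
      (use i Cons.prems in auto)
  show ?case
    unfolding foldr.simps o_apply
    by (rule monomial_op_cong[OF monomial_op_mult[OF ZX Cons.IH]])
      (use i Cons.prems in \<open>auto simp: fun_eq_iff power_add\<close>)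
qed

definition pauli_shift :: "nat \<Rightarrow> nat \<Rightarrow> (nat \<Rightarrow> nat) \<Rightarrow> (nat \<Rightarrow> nat) \<Rightarrow> nat \<Rightarrow> nat" where
  "pauli_shift n d b y = (\<lambda>m. if m < n then (y m + b m) mod d else y m)"

definition pauli_phase :: "nat \<Rightarrow> nat \<Rightarrow> (nat \<Rightarrow> nat) \<Rightarrow> (nat \<Rightarrow> nat) \<Rightarrow> (nat \<Rightarrow> nat) \<Rightarrow> complex" where
  "pauli_phase n d a b y = omega d ^ (\<Sum>m<n. a m * pauli_shift n d b y m)"

lemma monomial_op_pauli: "d > 0 \<Longrightarrow> monomial_op n d (pauli n d a b) (pauli_shift n d b) (pauli_phase n d a b)"
  unfolding pauli_def
  by (rule monomial_op_cong[OF monomial_op_pauli_foldr])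
    (auto simp: pauli_shift_def pauli_phase_def atLeast0LessThan)

lemma S_pauli_commute:
  assumes "j < n" "odd d"
  shows "op_eq n d (op_mult n d (lift1 j (gS d)) (pauli n d a b))
           (op_scale (omega d ^ (b j * (b j - 1) div 2 * (d - 1)))
              (op_mult n d (pauli n d (a(j := a j + b j)) b) (lift1 j (gS d))))"
proof -
  have d: "d > 0"
    using assms(2) by (rule odd_pos)
  show ?thesis
  proof (rule op_eq_monomial_op[OF monomial_op_mult[OF monomial_op_S[OF assms(1)] monomial_op_pauli[OF d]]
        monomial_op_scale[OF monomial_op_mult[OF monomial_op_pauli[OF d] monomial_op_S[OF assms(1)]]]])
    fix y
    define x where "x = pauli_shift n d b y"
    have xj: "x j = (y j + b j) mod d"
      using assms(1) by (simp add: x_def pauli_shift_def)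
    have "(\<Sum>m<n. (a(j := a j + b j)) m * x m) + a j * x j = (\<Sum>m<n. a m * x m) + (a j + b j) * x j"
      using sum_eq_off_subset[of "{..<n}" "{j}" "\<lambda>m. (a(j := a j + b j)) m * x m" "\<lambda>m. a m * x m"] assms(1)
      by simp
    then have phase: "(\<Sum>m<n. (a(j := a j + b j)) m * x m) = (\<Sum>m<n. a m * x m) + b j * x j"
      by (simp add: algebra_simps)
    have "omega d ^ (x j * (x j + 1) div 2 + (\<Sum>m<n. a m * x m))
        = omega d ^ (b j * (b j - 1) div 2 * (d - 1) + ((\<Sum>m<n. a m * x m) + b j * x j + y j * (y j + 1) div 2))"
      by (rule omega_pow_cong)
        (use cong_add[OF S_phase_cong[OF assms(2) xj] cong_refl, of "\<Sum>m<n. a m * x m"] in \<open>simp add: ac_simps\<close>)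
    then show "(id \<circ> pauli_shift n d b) y = (pauli_shift n d b \<circ> id) y \<and>
        omega d ^ (pauli_shift n d b y j * (pauli_shift n d b y j + 1) div 2) * pauli_phase n d a b y =
        omega d ^ (b j * (b j - 1) div 2 * (d - 1)) *
          (pauli_phase n d (a(j := a j + b j)) b (id y) * omega d ^ (y j * (y j + 1) div 2))"
      unfolding pauli_phase_def o_apply id_apply x_def[symmetric] phase
      by (simp add: power_add ac_simps)
  qed
qed

lemma CX_pauli_commute:
  assumes "i < n" "k < n" "i \<noteq> k" "d > 0"
  shows "op_eq n d (op_mult n d (CX d i k) (pauli n d a b))
           (op_mult n d (pauli n d (a(i := a i + (d - 1) * a k)) (b(k := b k + b i))) (CX d i k))"
proof (rule op_eq_monomial_op[OF monomial_op_mult[OF monomial_op_CX[OF assms] monomial_op_pauli[OF assms(4)]]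
      monomial_op_mult[OF monomial_op_pauli[OF assms(4)] monomial_op_CX[OF assms]]])
  fix y
  let ?a = "a(i := a i + (d - 1) * a k)" and ?b = "b(k := b k + b i)"
    and ?cx = "\<lambda>y :: nat \<Rightarrow> nat. y(k := (y i + y k) mod d)"
  define x where "x = pauli_shift n d b y"
  have shift: "?cx x = pauli_shift n d ?b (?cx y)"
    using assms by (auto simp: x_def pauli_shift_def fun_eq_iff mod_simps; simp add: ac_simps)
  have "(\<Sum>m<n. ?a m * ?cx x m) + (a i * x i + a k * x k)
      = (\<Sum>m<n. a m * x m) + ((a i + (d - 1) * a k) * x i + a k * ((x i + x k) mod d))"
    using sum_eq_off_subset[of "{..<n}" "{i, k}" "\<lambda>m. ?a m * ?cx x m" "\<lambda>m. a m * x m"] assms(1-3)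
    by simp
  then have "[(\<Sum>m<n. ?a m * ?cx x m) + (a i * x i + a k * x k) = (\<Sum>m<n. a m * x m) + (a i * x i + a k * x k)] (mod d)"
    using cong_add[OF cong_refl CX_phase_cong[OF assms(4)]] by metis
  then have "omega d ^ (\<Sum>m<n. ?a m * ?cx x m) = omega d ^ (\<Sum>m<n. a m * x m)"
    by (intro omega_pow_cong) (simp add: cong_add_rcancel_nat)
  then show "(?cx \<circ> pauli_shift n d b) y = (pauli_shift n d ?b \<circ> ?cx) y \<and>
      1 * pauli_phase n d a b y = pauli_phase n d ?a ?b (?cx y) * 1"
    unfolding pauli_phase_def o_apply shift[symmetric] x_def[symmetric] by simp
qed

lemma S_invertible: "j < n \<Longrightarrow> \<exists>B. op_inverse n d (lift1 j (gS d)) B"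
  by (rule monomial_op_invertible[OF monomial_op_S, where q = id]) (simp_all add: omega_nonzero)

lemma CX_invertible:
  assumes "i < n" "k < n" "i \<noteq> k" "d > 0"
  shows "\<exists>B. op_inverse n d (CX d i k) B"
proof -
  have cancel: "(t + (u + (d - Suc 0) * t)) mod d = u mod d" "(t + u + (d - Suc 0) * t) mod d = u mod d"
    for t u :: nat
  proof -
    have "t + (u + (d - Suc 0) * t) = u + d * t" "t + u + (d - Suc 0) * t = u + d * t"
      using assms(4) by (cases d; simp)+
    then show "(t + (u + (d - Suc 0) * t)) mod d = u mod d" "(t + u + (d - Suc 0) * t) mod d = u mod d"
      by (simp_all only: mod_mult_self2)
  qed
  show ?thesis
    by (rule monomial_op_invertible[OF monomial_op_CX[OF assms], where q = "\<lambda>y. y(k := (y k + (d - 1) * y i) mod d)"])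
      (use assms in \<open>auto simp: Conf_def fun_eq_iff mod_simps cancel\<close>)
qed

lemma op_mult_cancel_inner:
  "op_eq n d (op_mult n d B C) op_id \<Longrightarrow>
   op_eq n d (op_mult n d (op_mult n d A B) (op_mult n d C D)) (op_mult n d A D)"
proof -
  assume BC: "op_eq n d (op_mult n d B C) op_id"
  have "op_eq n d (op_mult n d (op_mult n d A B) (op_mult n d C D)) (op_mult n d A (op_mult n d (op_mult n d B C) D))"
    by (simp add: op_mult_assoc)
  also have "op_eq n d \<dots> (op_mult n d A (op_mult n d op_id D))"
    by (rule op_eq_mult[OF op_eq_refl op_eq_mult[OF BC op_eq_refl]])
  also have "op_eq n d \<dots> (op_mult n d A D)"
    by (rule op_eq_mult[OF op_eq_refl op_mult_id_left])
  finally show ?thesis .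
qed

lemma op_inverse_mult:
  assumes "op_inverse n d M Minv" "op_inverse n d G Ginv"
  shows "op_inverse n d (op_mult n d G M) (op_mult n d Minv Ginv)"
proof -
  have "op_eq n d (op_mult n d M Minv) op_id" "op_eq n d (op_mult n d Minv M) op_id"
    "op_eq n d (op_mult n d G Ginv) op_id" "op_eq n d (op_mult n d Ginv G) op_id"
    using assms by (simp_all add: op_inverse_def)
  then show ?thesis
    unfolding op_inverse_def
    by (meson op_eq_trans op_mult_cancel_inner)
qed

lemma op_conjugate_mult:
  assumes "op_eq n d (op_mult n d (op_mult n d M P) Minv) (op_scale lam P')"
    and "op_eq n d (op_mult n d G P') (op_scale l (op_mult n d P'' G))"
    and "op_eq n d (op_mult n d G Ginv) op_id"
  shows "op_eq n d (op_mult n d (op_mult n d (op_mult n d G M) P) (op_mult n d Minv Ginv)) (op_scale (lam * l) P'')"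
proof -
  have "op_eq n d (op_mult n d (op_mult n d (op_mult n d G M) P) (op_mult n d Minv Ginv))
      (op_mult n d G (op_mult n d (op_mult n d (op_mult n d M P) Minv) Ginv))"
    by (simp add: op_mult_assoc)
  also have "op_eq n d \<dots> (op_mult n d G (op_mult n d (op_scale lam P') Ginv))"
    by (rule op_eq_mult[OF op_eq_refl op_eq_mult[OF assms(1) op_eq_refl]])
  also have "op_eq n d \<dots> (op_scale lam (op_mult n d (op_mult n d G P') Ginv))"
    by (simp add: op_mult_scale_left op_mult_scale_right op_mult_assoc)
  also have "op_eq n d \<dots> (op_scale lam (op_mult n d (op_scale l (op_mult n d P'' G)) Ginv))"
    by (rule op_eq_scale[OF op_eq_mult[OF assms(2) op_eq_refl]])
  also have "op_eq n d \<dots> (op_scale (lam * l) (op_mult n d P'' (op_mult n d G Ginv)))"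
    by (simp add: op_mult_scale_left op_scale_scale op_mult_assoc)
  also have "op_eq n d \<dots> (op_scale (lam * l) (op_mult n d P'' op_id))"
    by (rule op_eq_scale[OF op_eq_mult[OF op_eq_refl assms(3)]])
  also have "op_eq n d \<dots> (op_scale (lam * l) P'')"
    by (rule op_eq_scale[OF op_mult_id_right])
  finally show ?thesis .
qed

definition circuit_conjugate :: "nat \<Rightarrow> nat \<Rightarrow> qop \<Rightarrow> qop \<Rightarrow> qop \<Rightarrow> qop \<Rightarrow> bool" where
  "circuit_conjugate n d P Q P' Q' \<longleftrightarrow> (\<exists>M Minv. circuit n d M \<and> op_inverse n d M Minv \<and>
     (\<exists>lam mu. op_eq n d (op_mult n d (op_mult n d M P) Minv) (op_scale lam P')
             \<and> op_eq n d (op_mult n d (op_mult n d M Q) Minv) (op_scale mu Q')))"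

lemma circuit_conjugate_refl: "circuit_conjugate n d P Q P Q"
proof -
  have "op_eq n d (op_mult n d (op_mult n d op_id A) op_id) (op_scale 1 A)" for A
    unfolding op_scale_one by (rule op_eq_trans[OF op_mult_id_right op_mult_id_left])
  then show ?thesis
    unfolding circuit_conjugate_def op_inverse_def
    by (intro exI[of _ op_id] conjI circuit.circ_id op_mult_id_right) auto
qed

lemma circuit_conjugate_gate:
  assumes "circuit_conjugate n d P Q P' Q'"
    and "\<And>M. circuit n d M \<Longrightarrow> circuit n d (op_mult n d G M)"
    and "op_inverse n d G Ginv"
    and "op_eq n d (op_mult n d G P') (op_scale l (op_mult n d P'' G))"
    and "op_eq n d (op_mult n d G Q') (op_scale l' (op_mult n d Q'' G))"
  shows "circuit_conjugate n d P Q P'' Q''"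
proof -
  obtain M Minv lam mu where M: "circuit n d M" "op_inverse n d M Minv"
    and P: "op_eq n d (op_mult n d (op_mult n d M P) Minv) (op_scale lam P')"
    and Q: "op_eq n d (op_mult n d (op_mult n d M Q) Minv) (op_scale mu Q')"
    using assms(1) unfolding circuit_conjugate_def by blast
  have G: "op_eq n d (op_mult n d G Ginv) op_id"
    using assms(3) by (simp add: op_inverse_def)
  show ?thesis
    unfolding circuit_conjugate_def
    using assms(2)[OF M(1)] op_inverse_mult[OF M(2) assms(3)]
      op_conjugate_mult[OF P assms(4) G] op_conjugate_mult[OF Q assms(5) G]
    by blast
qed

section \<open>The action of S and CX on exponents\<close>

type_synonym pauli_exp = "(nat \<Rightarrow> nat) \<times> (nat \<Rightarrow> nat)"

abbreviation pauli_of :: "nat \<Rightarrow> nat \<Rightarrow> pauli_exp \<Rightarrow> qop" where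
  "pauli_of n d p \<equiv> pauli n d (fst p) (snd p)"

fun S_action :: "nat \<Rightarrow> pauli_exp \<Rightarrow> pauli_exp" where
  "S_action j (a, b) = (a(j := a j + b j), b)"

(* The factor d - 1 stands for -1 modulo d, the exponents being natural numbers. *)
fun CX_action :: "nat \<Rightarrow> nat \<Rightarrow> nat \<Rightarrow> pauli_exp \<Rightarrow> pauli_exp" where
  "CX_action d i k (a, b) = (a(i := a i + (d - 1) * a k), b(k := b k + b i))"

inductive reachable :: "nat \<Rightarrow> nat \<Rightarrow> pauli_exp \<Rightarrow> pauli_exp \<Rightarrow> pauli_exp \<Rightarrow> pauli_exp \<Rightarrow> bool"
  for n d p0 q0 where
  reachable_refl: "reachable n d p0 q0 p0 q0"
| reachable_S: "reachable n d p0 q0 p q \<Longrightarrow> j < n \<Longrightarrow> reachable n d p0 q0 (S_action j p) (S_action j q)"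
| reachable_CX: "reachable n d p0 q0 p q \<Longrightarrow> i < n \<Longrightarrow> k < n \<Longrightarrow> i \<noteq> k \<Longrightarrow>
    reachable n d p0 q0 (CX_action d i k p) (CX_action d i k q)"

lemma reachable_circuit_conjugate:
  assumes "reachable n d p0 q0 p q" "odd d"
  shows "circuit_conjugate n d (pauli_of n d p0) (pauli_of n d q0) (pauli_of n d p) (pauli_of n d q)"
  using assms(1)
proof (induction rule: reachable.induct)
  case reachable_refl
  show ?case
    by (rule circuit_conjugate_refl)
next
  case (reachable_S p q j)
  obtain Sinv where "op_inverse n d (lift1 j (gS d)) Sinv"
    using S_invertible[OF reachable_S.hyps(2)] by blast
  moreover have "\<exists>l. op_eq n d (op_mult n d (lift1 j (gS d)) (pauli_of n d r))
      (op_scale l (op_mult n d (pauli_of n d (S_action j r)) (lift1 j (gS d))))" for r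
    using S_pauli_commute[OF reachable_S.hyps(2) assms(2), of "fst r" "snd r"] by (cases r) auto
  ultimately show ?case
    using circuit_conjugate_gate[OF reachable_S.IH circuit.circ_S[OF _ reachable_S.hyps(2)]] by blast
next
  case (reachable_CX p q i k)
  have d: "d > 0"
    using assms(2) by (rule odd_pos)
  obtain CXinv where "op_inverse n d (CX d i k) CXinv"
    using CX_invertible[OF reachable_CX.hyps(2-4) d] by blast
  moreover have "op_eq n d (op_mult n d (CX d i k) (pauli_of n d r))
      (op_scale 1 (op_mult n d (pauli_of n d (CX_action d i k r)) (CX d i k)))" for r
    using CX_pauli_commute[OF reachable_CX.hyps(2-4) d, of "fst r" "snd r"] by (cases r) (simp add: op_scale_one)
  ultimately show ?case
    using circuit_conjugate_gate[OF reachable_CX.IH circuit.circ_CX[OF _ reachable_CX.hyps(2-4)]] by blast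
qed

definition symp_form :: "nat \<Rightarrow> pauli_exp \<Rightarrow> pauli_exp \<Rightarrow> int" where
  "symp_form n p q = (\<Sum>i<n. int (fst p i * snd q i) - int (snd p i * fst q i))"

lemma symp_form_S_action: "symp_form n (S_action j p) (S_action j q) = symp_form n p q"
  by (cases p, cases q) (auto simp: symp_form_def algebra_simps intro!: sum.cong)

lemma symp_form_CX_action:
  assumes "i < n" "k < n" "i \<noteq> k" "d > 0"
  shows "symp_form n (CX_action d i k p) (CX_action d i k q)
       = symp_form n p q + int d * (int (fst p k * snd q i) - int (snd p i * fst q k))"
proof -
  obtain a b c e where p: "p = (a, b)" and q: "q = (c, e)"
    by (cases p, cases q)
  obtain d' where d': "d = Suc d'"
    using assms(4) by (cases d) auto
  define f where "f = (\<lambda>m. int (fst p m * snd q m) - int (snd p m * fst q m))"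
  define f' where "f' = (\<lambda>m. int (fst (CX_action d i k p) m * snd (CX_action d i k q) m)
                             - int (snd (CX_action d i k p) m * fst (CX_action d i k q) m))"
  have "f' i + f' k = f i + f k + int d * (int (fst p k * snd q i) - int (snd p i * fst q k))"
    using assms(3) by (simp add: f_def f'_def p q d' algebra_simps)
  moreover have "sum f' {..<n} + (f i + f k) = sum f {..<n} + (f' i + f' k)"
    using sum_eq_off_subset[of "{..<n}" "{i, k}" f' f] assms(1-3) by (auto simp: f_def f'_def p q)
  ultimately show ?thesis
    unfolding symp_form_def f_def[symmetric] f'_def[symmetric] by simp
qed

lemma reachable_symp_form:
  "reachable n d p0 q0 p q \<Longrightarrow> d > 0 \<Longrightarrow> symp_form n p q mod int d = symp_form n p0 q0 mod int d"
  by (induction rule: reachable.induct) (simp_all add: symp_form_S_action symp_form_CX_action)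

section \<open>Localizing a Pauli operator on one qudit\<close>

lemma CX_action_pow:
  "i \<noteq> k \<Longrightarrow> (CX_action d i k ^^ m) (a, b) = (a(i := a i + m * ((d - 1) * a k)), b(k := b k + m * b i))"
  by (induction m) (auto simp: fun_eq_iff add_ac)

lemma reachable_CX_pow:
  "reachable n d p0 q0 p q \<Longrightarrow> i < n \<Longrightarrow> k < n \<Longrightarrow> i \<noteq> k \<Longrightarrow>
   reachable n d p0 q0 ((CX_action d i k ^^ m) p) ((CX_action d i k ^^ m) q)"
  by (induction m) (auto intro: reachable_CX)

lemma prime_mod_eq_0_solvable:
  fixes d t u :: nat
  assumes "prime d" "u mod d \<noteq> 0"
  shows "\<exists>m. (t + m * u) mod d = 0"
proof -
  have "coprime u d"
    using assms by (simp add: prime_imp_coprime coprime_commute dvd_eq_mod_eq_0)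
  then obtain m where m: "[u * m = (d - 1) * t] (mod d)"
    using cong_solve by blast
  have "[t + m * u = t + (d - 1) * t] (mod d)"
    using m by (intro cong_add cong_refl) (simp add: mult.commute)
  also have "t + (d - 1) * t = d * t"
    using prime_gt_0_nat[OF assms(1)] by (cases d) simp_all
  finally have "(t + m * u) mod d = 0"
    by (simp add: cong_def)
  then show ?thesis ..
qed

lemma successive_elimination:
  fixes P :: "'s \<Rightarrow> bool" and Z :: "nat \<Rightarrow> 's \<Rightarrow> bool"
  assumes "P start"
    and step: "\<And>s t. P s \<Longrightarrow> t < n \<Longrightarrow> t \<noteq> j \<Longrightarrow> \<exists>s'. P s' \<and> Z t s' \<and> (\<forall>k. k \<noteq> t \<longrightarrow> Z k s \<longrightarrow> Z k s')"
  shows "\<exists>s. P s \<and> (\<forall>t<n. t \<noteq> j \<longrightarrow> Z t s)"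
proof -
  have "\<exists>s. P s \<and> (\<forall>t<m. t \<noteq> j \<longrightarrow> Z t s)" if "m \<le> n" for m
    using that
  proof (induction m)
    case 0
    show ?case
      using assms(1) by blast
  next
    case (Suc m)
    then obtain s where s: "P s" "\<forall>t<m. t \<noteq> j \<longrightarrow> Z t s"
      by auto
    show ?case
    proof (cases "m = j")
      case True
      then show ?thesis
        using s less_Suc_eq by auto
    next
      case False
      then obtain s' where "P s'" "Z m s'" "\<forall>k. k \<noteq> m \<longrightarrow> Z k s \<longrightarrow> Z k s'"
        using step[OF s(1), of m] Suc.prems by auto
      then show ?thesis
        using s(2) less_Suc_eq by auto
    qed
  qed
  then show ?thesis
    by blast
qed

lemma reachable_clear_X:
  assumes "reachable n d p0 q0 p q" "prime d" "j < n" "snd p j mod d \<noteq> 0"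
  shows "\<exists>p' q'. reachable n d p0 q0 p' q' \<and> fst p' j mod d \<noteq> 0 \<and> (\<forall>k<n. k \<noteq> j \<longrightarrow> snd p' k mod d = 0)"
proof -
  have "\<exists>s. (reachable n d p0 q0 (fst s) (snd s) \<and> snd (fst s) j = snd p j)
      \<and> (\<forall>t<n. t \<noteq> j \<longrightarrow> snd (fst s) t mod d = 0)"
  proof (rule successive_elimination[where start = "(p, q)"])
    fix s :: "pauli_exp \<times> pauli_exp" and t
    assume s: "reachable n d p0 q0 (fst s) (snd s) \<and> snd (fst s) j = snd p j" and t: "t < n" "t \<noteq> j"
    obtain a b where ab: "fst s = (a, b)"
      by (cases "fst s")
    obtain m where m: "(b t + m * snd p j) mod d = 0"
      using prime_mod_eq_0_solvable[OF assms(2,4), of "b t"] by metis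
    let ?s' = "((CX_action d j t ^^ m) (fst s), (CX_action d j t ^^ m) (snd s))"
    show "\<exists>s'. (reachable n d p0 q0 (fst s') (snd s') \<and> snd (fst s') j = snd p j) \<and> snd (fst s') t mod d = 0
        \<and> (\<forall>k. k \<noteq> t \<longrightarrow> snd (fst s) k mod d = 0 \<longrightarrow> snd (fst s') k mod d = 0)"
      using reachable_CX_pow[of n d p0 q0 "fst s" "snd s" j t m] s t assms(3) m ab
      by (intro exI[of _ ?s']) (auto simp: CX_action_pow)
  qed (use assms(1) in simp)
  then obtain p1 q1 where r1: "reachable n d p0 q0 p1 q1" and b1: "snd p1 j = snd p j"
    and z1: "\<forall>k<n. k \<noteq> j \<longrightarrow> snd p1 k mod d = 0"
    by auto
  show ?thesis
  proof (cases "fst p1 j mod d = 0")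
    case True
    have "fst (S_action j p1) j mod d \<noteq> 0"
      using True b1 assms(4) by (cases p1) (simp add: mod_add_left_eq[symmetric])
    moreover have "snd (S_action j p1) = snd p1"
      by (cases p1) simp
    ultimately show ?thesis
      using reachable_S[OF r1 assms(3)] z1 by metis
  qed (use r1 z1 in blast)
qed

lemma reachable_clear_Z:
  assumes "reachable n d p0 q0 p q" "prime d" "j < n" "fst p j mod d \<noteq> 0"
    and "\<forall>k<n. k \<noteq> j \<longrightarrow> snd p k mod d = 0"
  shows "\<exists>p' q'. reachable n d p0 q0 p' q' \<and> (\<forall>k<n. k \<noteq> j \<longrightarrow> fst p' k mod d = 0 \<and> snd p' k mod d = 0)"
proof -
  have unit: "(d - 1) * fst p j mod d \<noteq> 0"
  proof -
    have "\<not> d dvd d - 1"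
      using prime_gt_1_nat[OF assms(2)] by (intro nat_dvd_not_less) auto
    then show ?thesis
      using assms(2,4) by (simp add: dvd_eq_mod_eq_0[symmetric] prime_dvd_mult_iff)
  qed
  have "\<exists>s. (reachable n d p0 q0 (fst s) (snd s) \<and> fst (fst s) j = fst p j
        \<and> (\<forall>k<n. k \<noteq> j \<longrightarrow> snd (fst s) k mod d = 0))
      \<and> (\<forall>t<n. t \<noteq> j \<longrightarrow> fst (fst s) t mod d = 0)"
  proof (rule successive_elimination[where start = "(p, q)"])
    fix s :: "pauli_exp \<times> pauli_exp" and t
    assume s: "reachable n d p0 q0 (fst s) (snd s) \<and> fst (fst s) j = fst p j
        \<and> (\<forall>k<n. k \<noteq> j \<longrightarrow> snd (fst s) k mod d = 0)" and t: "t < n" "t \<noteq> j"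
    obtain a b where ab: "fst s = (a, b)"
      by (cases "fst s")
    obtain m where m: "(a t + m * ((d - 1) * fst p j)) mod d = 0"
      using prime_mod_eq_0_solvable[OF assms(2) unit, of "a t"] by metis
    let ?s' = "((CX_action d t j ^^ m) (fst s), (CX_action d t j ^^ m) (snd s))"
    show "\<exists>s'. (reachable n d p0 q0 (fst s') (snd s') \<and> fst (fst s') j = fst p j
          \<and> (\<forall>k<n. k \<noteq> j \<longrightarrow> snd (fst s') k mod d = 0)) \<and> fst (fst s') t mod d = 0
        \<and> (\<forall>k. k \<noteq> t \<longrightarrow> fst (fst s) k mod d = 0 \<longrightarrow> fst (fst s') k mod d = 0)"
      using reachable_CX_pow[of n d p0 q0 "fst s" "snd s" t j m] s t assms(3) m ab
      by (intro exI[of _ ?s']) (auto simp: CX_action_pow)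
  qed (use assms(1,5) in simp)
  then show ?thesis
    by blast
qed

lemma symp_terms_dvd:
  assumes "\<And>i. i \<in> A \<Longrightarrow> fst p i mod d = 0 \<and> snd p i mod d = 0"
  shows "int d dvd (\<Sum>i\<in>A. int (fst p i * snd q i) - int (snd p i * fst q i))"
proof (rule dvd_sum)
  fix i assume "i \<in> A"
  then have "d dvd fst p i" "d dvd snd p i"
    using assms by (auto simp: dvd_eq_mod_eq_0)
  then show "int d dvd int (fst p i * snd q i) - int (snd p i * fst q i)"
    by (metis dvd_diff dvd_mult2 int_dvd_int_iff)
qed

lemma symp_form_localized:
  assumes "j < n" "\<forall>k<n. k \<noteq> j \<longrightarrow> fst p k mod d = 0 \<and> snd p k mod d = 0"
  shows "symp_form n p q mod int d = (int (fst p j * snd q j) - int (snd p j * fst q j)) mod int d"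
proof -
  define f where "f = (\<lambda>i. int (fst p i * snd q i) - int (snd p i * fst q i))"
  have "symp_form n p q = f j + (\<Sum>i\<in>{..<n} - {j}. f i)"
    using assms(1) by (simp add: symp_form_def f_def sum.remove)
  moreover have "int d dvd (\<Sum>i\<in>{..<n} - {j}. f i)"
    unfolding f_def using assms(2) by (intro symp_terms_dvd) auto
  ultimately show ?thesis
    by (auto simp: f_def)
qed

lemma reachable_localize:
  assumes "prime d" "\<exists>j<n. fst p0 j mod d \<noteq> 0 \<or> snd p0 j mod d \<noteq> 0"
  shows "\<exists>p q j. reachable n d p0 q0 p q \<and> j < n \<and> (\<forall>k<n. k \<noteq> j \<longrightarrow> fst p k mod d = 0 \<and> snd p k mod d = 0)"
proof (cases "\<exists>j<n. snd p0 j mod d \<noteq> 0")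
  case True
  then obtain j where j: "j < n" "snd p0 j mod d \<noteq> 0"
    by blast
  obtain p1 q1 where "reachable n d p0 q0 p1 q1" "fst p1 j mod d \<noteq> 0" "\<forall>k<n. k \<noteq> j \<longrightarrow> snd p1 k mod d = 0"
    using reachable_clear_X[OF reachable_refl assms(1) j] by blast
  then show ?thesis
    using reachable_clear_Z[OF _ assms(1) j(1)] j(1) by blast
next
  case False
  then obtain j where "j < n" "fst p0 j mod d \<noteq> 0"
    using assms(2) by blast
  then show ?thesis
    using reachable_clear_Z[OF reachable_refl assms(1)] False by blast
qed

theorem lemma8:
  fixes d n :: nat and a b c e :: "nat \<Rightarrow> nat"
  assumes "prime d" and "odd d" and "n \<ge> 1"
    and "(\<Sum>i<n. int (a i * e i) - int (b i * c i)) mod int d = 1"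
  shows "\<exists>M Minv. circuit n d M
           \<and> op_eq n d (op_mult n d M Minv) op_id \<and> op_eq n d (op_mult n d Minv M) op_id
           \<and> (\<exists>a' b' c' e' :: nat \<Rightarrow> nat. \<exists>lam mu :: complex.
                op_eq n d (op_mult n d (op_mult n d M (pauli n d a b)) Minv) (op_scale lam (pauli n d a' b'))
              \<and> op_eq n d (op_mult n d (op_mult n d M (pauli n d c e)) Minv) (op_scale mu (pauli n d c' e'))
              \<and> (\<exists>j<n. (int (a' j * e' j) - int (b' j * c' j)) mod int d = 1))"
proof -
  have symp0: "symp_form n (a, b) (c, e) mod int d = 1"
    using assms(4) by (simp add: symp_form_def)
  have "\<not> int d dvd symp_form n (a, b) (c, e)"
    using symp0 prime_gt_1_nat[OF assms(1)] by auto
  then have "\<exists>j<n. a j mod d \<noteq> 0 \<or> b j mod d \<noteq> 0"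
    unfolding symp_form_def using symp_terms_dvd[of "{..<n}" "(a, b)" d "(c, e)"] by fastforce
  then obtain p q j where r: "reachable n d (a, b) (c, e) p q" and j: "j < n"
    and loc: "\<forall>k<n. k \<noteq> j \<longrightarrow> fst p k mod d = 0 \<and> snd p k mod d = 0"
    using reachable_localize[OF assms(1), of n "(a, b)" "(c, e)"] by auto
  have "(int (fst p j * snd q j) - int (snd p j * fst q j)) mod int d = 1"
    using symp_form_localized[OF j loc] reachable_symp_form[OF r prime_gt_0_nat[OF assms(1)]] symp0
    by simp
  moreover have "circuit_conjugate n d (pauli n d a b) (pauli n d c e) (pauli_of n d p) (pauli_of n d q)"
    using reachable_circuit_conjugate[OF r assms(2)] by simp
  ultimately show ?thesis
    using j unfolding circuit_conjugate_def op_inverse_def by blast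
qed

end
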